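(* Let $a,b,c,x\in X$ with $a\ge b$, $a\neq b$, $x\ge c$, $x\ne c$. Then: (1) $\tau_{a,b}\,c_{x,\{c\}}\,\tau_{a,b}^{-1}\in K_{\{a,b,c,x\}}$; (2) for any $Y\subset X$ such that the partial conjugation $c_{x,Y}$ is defined, $\tau_{a,b}c_{x,Y}\tau_{a,b}^{-1}$ is a product of elements of $K_{\{a,b,x\}}$ and partial conjugations of the form $c_{z,Y'}$ with $z\in\{a,x\}$ and $Y'\subset Y\cup\{x,a\}$; (3) if $c_x$ denotes conjugation by $x$, then $\tau_{a,b}c_x\tau_{a,b}^{-1}\in K_{\{a,b,x\}}$.
   Context: $\Gamma$ is a finite simplicial graph with vertex set $X$, $A_\Gamma$ its right-angled Artin group ($x,y\in X$ commute iff adjacent). $L=X\cup X^{-1}$; for $u\in L$, $\bar u\in X$ is the vertex with $u\in\{\bar u,\bar u^{-1}\}$. $\mathrm{lk}(v)$ is the set of neighbours of $v$, $\mathrm{st}(v)=\mathrm{lk}(v)\cup\{v\}$. Domination: for $v,w\in X$, $v\ge w$ iff $\mathrm{lk}(w)\subset\mathrm{st}(v)$; for letters $u,u'\in L$, $u\ge u'$ iff $\bar u\ge\bar u'$. For $u,v\in L$ with $u\ge v$, $\bar u\ne\bar v$, the transvection $\tau_{u,v}$ is the automorphism sending $v\mapsto vu$ and fixing all generators other than $\bar v$. For $u\in L$ and $Y$ a union of connected components of $\Gamma-\mathrm{st}(\bar u)$, the partial conjugation $c_{u,Y}$ sends $y\mapsto u^{-1}yu$ for $y\in Y$ and fixes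 the other generators. For $u\ge v$, $\bar u\neq \bar v$, we write $c_{u,\{v\}}$ for the automorphism sending $v\mapsto u^{-1}vu$ and fixing all other generators (a one-term partial conjugation). For $x,y,c\in L$ with $x,y\ge c$ and $\bar x,\bar y,\bar c$ distinct, $\tau_{[x,y],c}$ is the automorphism sending $c\mapsto c[x,y]$ and fixing all generators other than $\bar c$. For $Z\subset X$, $K_Z\le\mathrm{Aut}\,A_\Gamma$ is the subgroup generated by all $\tau_{[x,y],c}$ and all $c_{x,\{c\}}$ with $x,y,c\in Z$ (pairwise distinct where required) and $x,y\ge c$, together with all inner automorphisms of $A_\Gamma$. *)

theory Defs
  imports "HOL-Algebra.Algebra"
begin

definition simple_graph :: "'v set \<Rightarrow> ('v \<Rightarrow> 'v \<Rightarrow> bool) \<Rightarrow> bool" where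
  "simple_graph V Adj \<longleftrightarrow> finite V \<and>
     (\<forall>u v. Adj u v \<longrightarrow> u \<in> V \<and> v \<in> V \<and> u \<noteq> v \<and> Adj v u)"

definition lk :: "('v \<Rightarrow> 'v \<Rightarrow> bool) \<Rightarrow> 'v \<Rightarrow> 'v set" where
  "lk Adj v = {w. Adj v w}"

definition st :: "('v \<Rightarrow> 'v \<Rightarrow> bool) \<Rightarrow> 'v \<Rightarrow> 'v set" where
  "st Adj v = insert v (lk Adj v)"

text \<open>Domination v \<ge> w iff lk(w) \<subseteq> st(v).\<close>
definition dominates :: "('v \<Rightarrow> 'v \<Rightarrow> bool) \<Rightarrow> 'v \<Rightarrow> 'v \<Rightarrow> bool" where
  "dominates Adj v w \<longleftrightarrow> lk Adj w \<subseteq> st Adj v"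

definition union_of_components :: "'v set \<Rightarrow> ('v \<Rightarrow> 'v \<Rightarrow> bool) \<Rightarrow> 'v \<Rightarrow> 'v set \<Rightarrow> bool" where
  "union_of_components V Adj v Y \<longleftrightarrow> Y \<subseteq> V - st Adj v \<and>
     (\<forall>p\<in>Y. \<forall>q. (\<lambda>s t. s \<in> V - st Adj v \<and> t \<in> V - st Adj v \<and> Adj s t)\<^sup>*\<^sup>* p q \<longrightarrow> q \<in> Y)"

text \<open>A letter (v, False) stands for the generator v, (v, True) for v\<inverse>.
  The underlying vertex of a letter l is fst l.\<close>
type_synonym 'v letter = "'v \<times> bool"
type_synonym 'v word = "'v letter list"

definition inv_letter :: "'v letter \<Rightarrow> 'v letter" where
  "inv_letter l = (fst l, \<not> snd l)"

definition inv_word :: "'v word \<Rightarrow> 'v word" where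
  "inv_word w = rev (map inv_letter w)"

definition words :: "'v set \<Rightarrow> 'v word set" where
  "words V = lists (V \<times> (UNIV :: bool set))"

inductive raag_step :: "'v set \<Rightarrow> ('v \<Rightarrow> 'v \<Rightarrow> bool) \<Rightarrow> 'v word \<Rightarrow> 'v word \<Rightarrow> bool"
  for V Adj where
  cancel: "fst l \<in> V \<Longrightarrow> raag_step V Adj (u @ [l, inv_letter l] @ w) (u @ w)"
| commute: "Adj (fst l) (fst l') \<Longrightarrow> raag_step V Adj (u @ [l, l'] @ w) (u @ [l', l] @ w)"

definition raag_eq :: "'v set \<Rightarrow> ('v \<Rightarrow> 'v \<Rightarrow> bool) \<Rightarrow> 'v word \<Rightarrow> 'v word \<Rightarrow> bool" where
  "raag_eq V Adj = (sup (raag_step V Adj) (raag_step V Adj)\<inverse>\<inverse>)\<^sup>*\<^sup>*"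

definition raag_class :: "'v set \<Rightarrow> ('v \<Rightarrow> 'v \<Rightarrow> bool) \<Rightarrow> 'v word \<Rightarrow> 'v word set" where
  "raag_class V Adj w = {w'. raag_eq V Adj w w'}"

definition RAAG :: "'v set \<Rightarrow> ('v \<Rightarrow> 'v \<Rightarrow> bool) \<Rightarrow> 'v word set monoid" where
  "RAAG V Adj = \<lparr>carrier = raag_class V Adj ` words V,
     monoid.mult = (\<lambda>A B. {w. \<exists>a\<in>A. \<exists>b\<in>B. raag_eq V Adj (a @ b) w}),
     monoid.one = raag_class V Adj []\<rparr>"

text \<open>The automorphism group Aut A_\<Gamma> (composition of maps: f \<otimes> g = f \<circ> g).\<close>
abbreviation AutRAAG :: "'v set \<Rightarrow> ('v \<Rightarrow> 'v \<Rightarrow> bool) \<Rightarrow> ('v word set \<Rightarrow> 'v word set) monoid" where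
  "AutRAAG V Adj \<equiv> AutoGroup (RAAG V Adj)"

definition subst_word :: "('v \<Rightarrow> 'v word) \<Rightarrow> 'v word \<Rightarrow> 'v word" where
  "subst_word \<phi> w = concat (map (\<lambda>l. if snd l then inv_word (\<phi> (fst l)) else \<phi> (fst l)) w)"

definition induced_map :: "'v set \<Rightarrow> ('v \<Rightarrow> 'v \<Rightarrow> bool) \<Rightarrow> ('v \<Rightarrow> 'v word) \<Rightarrow> 'v word set \<Rightarrow> 'v word set" where
  "induced_map V Adj \<phi> = (\<lambda>A \<in> carrier (RAAG V Adj).
      {w. \<exists>a\<in>A. raag_eq V Adj (subst_word \<phi> a) w})"

definition send_letter :: "'v letter \<Rightarrow> 'v word \<Rightarrow> 'v \<Rightarrow> 'v word" where
  "send_letter v w = (\<lambda>g. if g = fst v then (if snd v then inv_word w else w) else [(g, False)])"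

definition transvection :: "'v set \<Rightarrow> ('v \<Rightarrow> 'v \<Rightarrow> bool) \<Rightarrow> 'v letter \<Rightarrow> 'v letter \<Rightarrow> 'v word set \<Rightarrow> 'v word set" where
  "transvection V Adj u v = induced_map V Adj (send_letter v [v, u])"

definition conj_one :: "'v set \<Rightarrow> ('v \<Rightarrow> 'v \<Rightarrow> bool) \<Rightarrow> 'v letter \<Rightarrow> 'v letter \<Rightarrow> 'v word set \<Rightarrow> 'v word set" where
  "conj_one V Adj u v = induced_map V Adj (send_letter v [inv_letter u, v, u])"

definition comm_transvection :: "'v set \<Rightarrow> ('v \<Rightarrow> 'v \<Rightarrow> bool) \<Rightarrow> 'v letter \<Rightarrow> 'v letter \<Rightarrow> 'v letter \<Rightarrow> 'v word set \<Rightarrow> 'v word set" where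
  "comm_transvection V Adj x y c =
     induced_map V Adj (send_letter c [c, inv_letter x, inv_letter y, x, y])"

definition partial_conj :: "'v set \<Rightarrow> ('v \<Rightarrow> 'v \<Rightarrow> bool) \<Rightarrow> 'v letter \<Rightarrow> 'v set \<Rightarrow> 'v word set \<Rightarrow> 'v word set" where
  "partial_conj V Adj u Y = induced_map V Adj
     (\<lambda>g. if g \<in> Y then [inv_letter u, (g, False), u] else [(g, False)])"

definition inner_aut :: "'v set \<Rightarrow> ('v \<Rightarrow> 'v \<Rightarrow> bool) \<Rightarrow> 'v word \<Rightarrow> 'v word set \<Rightarrow> 'v word set" where
  "inner_aut V Adj w = induced_map V Adj (\<lambda>g. inv_word w @ [(g, False)] @ w)"

definition K_gens :: "'v set \<Rightarrow> ('v \<Rightarrow> 'v \<Rightarrow> bool) \<Rightarrow> 'v set \<Rightarrow> ('v word set \<Rightarrow> 'v word set) set" where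
  "K_gens V Adj Z =
     {comm_transvection V Adj x y c | x y c.
        fst x \<in> Z \<and> fst y \<in> Z \<and> fst c \<in> Z \<and> distinct [fst x, fst y, fst c] \<and>
        dominates Adj (fst x) (fst c) \<and> dominates Adj (fst y) (fst c)}
   \<union> {conj_one V Adj x c | x c.
        fst x \<in> Z \<and> fst c \<in> Z \<and> fst x \<noteq> fst c \<and> dominates Adj (fst x) (fst c)}
   \<union> {inner_aut V Adj w | w. w \<in> words V}"

definition K_sub :: "'v set \<Rightarrow> ('v \<Rightarrow> 'v \<Rightarrow> bool) \<Rightarrow> 'v set \<Rightarrow> ('v word set \<Rightarrow> 'v word set) set" where
  "K_sub V Adj Z = generate (AutRAAG V Adj) (K_gens V Adj Z)"

end

theory Submission
  imports Defs
begin

text \<open>Every automorphism occurring here is induced by a substitution of words for the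
  generators, and composing induced automorphisms corresponds to composing substitutions. Hence
  the conjugate of an induced automorphism by \<open>\<tau>\<^bsub>a,b\<^esub>\<close> is determined by the images of the
  generators under the composite substitution, and each claim becomes a case distinction on the
  relative position of \<open>a, b, c, x\<close> (and of \<open>a, b\<close> with respect to \<open>Y\<close> and \<open>st(x)\<close>): in every
  case the composite agrees on each generator, up to free reduction and at most one commutation,
  with an explicit product of commutator transvections, one-term conjugations and partial
  conjugations. Domination \<open>lk(b) \<subseteq> st(a)\<close> is what makes all these substitutions respect the
  commutation relations; when \<open>Y\<close> separates \<open>a\<close> from \<open>b\<close> it moreover forces \<open>x \<ge> b\<close>, which is
  where the commutator transvections in (2) come from.\<close>

section \<open>Words and substitutions\<close>

lemma inv_letter_inv [simp]: "inv_letter (inv_letter l) = l"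
  by (simp add: inv_letter_def)

lemma inv_letter_pair [simp]: "inv_letter (v, s) = (v, \<not> s)"
  by (simp add: inv_letter_def)

lemma inv_word_inv [simp]: "inv_word (inv_word w) = w"
  by (simp add: inv_word_def rev_map comp_def)

lemma inv_word_simps [simp]:
  "inv_word [] = []"
  "inv_word (l # w) = inv_word w @ [inv_letter l]"
  "inv_word (u @ w) = inv_word w @ inv_word u"
  by (simp_all add: inv_word_def)

abbreviation letter_image :: "('v \<Rightarrow> 'v word) \<Rightarrow> 'v letter \<Rightarrow> 'v word" where
  "letter_image \<phi> l \<equiv> (if snd l then inv_word (\<phi> (fst l)) else \<phi> (fst l))"

lemma subst_word_simps [simp]:
  "subst_word \<phi> [] = []"
  "subst_word \<phi> (l # w) = letter_image \<phi> l @ subst_word \<phi> w"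
  "subst_word \<phi> (u @ w) = subst_word \<phi> u @ subst_word \<phi> w"
  by (simp_all add: subst_word_def)

lemma subst_word_inv_word: "subst_word \<phi> (inv_word w) = inv_word (subst_word \<phi> w)"
  by (induction w) (auto simp: inv_letter_def)

lemma subst_word_subst_word:
  "subst_word \<phi> (subst_word \<psi> w) = subst_word (\<lambda>g. subst_word \<phi> (\<psi> g)) w"
  by (induction w) (auto simp: subst_word_inv_word)

lemma subst_word_generators: "subst_word (\<lambda>g. [(g, False)]) w = w"
  by (induction w) (auto simp: inv_letter_def)

fun free_red :: "'v word \<Rightarrow> 'v word" where
  "free_red [] = []"
| "free_red (l # w) =
     (case free_red w of [] \<Rightarrow> [l] | m # r \<Rightarrow> if m = inv_letter l then r else l # m # r)"

definition transv_subst :: "'v \<Rightarrow> bool \<Rightarrow> 'v \<Rightarrow> 'v \<Rightarrow> 'v word" where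
  "transv_subst a s b = (\<lambda>g. if g = b then [(b, False), (a, s)] else [(g, False)])"

definition conj_one_subst :: "'v \<Rightarrow> bool \<Rightarrow> 'v \<Rightarrow> 'v \<Rightarrow> 'v word" where
  "conj_one_subst x s c = (\<lambda>g. if g = c then [(x, \<not> s), (c, False), (x, s)] else [(g, False)])"

definition comm_transv_subst :: "'v \<Rightarrow> bool \<Rightarrow> 'v \<Rightarrow> bool \<Rightarrow> 'v \<Rightarrow> 'v \<Rightarrow> 'v word" where
  "comm_transv_subst x s y t c =
     (\<lambda>g. if g = c then [(c, False), (x, \<not> s), (y, \<not> t), (x, s), (y, t)] else [(g, False)])"

definition pconj_subst :: "'v \<Rightarrow> bool \<Rightarrow> 'v set \<Rightarrow> 'v \<Rightarrow> 'v word" where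
  "pconj_subst x s Y = (\<lambda>g. if g \<in> Y then [(x, \<not> s), (g, False), (x, s)] else [(g, False)])"

definition inner_subst :: "'v word \<Rightarrow> 'v \<Rightarrow> 'v word" where
  "inner_subst w = (\<lambda>g. inv_word w @ [(g, False)] @ w)"

lemma send_letter_False: "send_letter (b, False) w = (\<lambda>g. if g = b then w else [(g, False)])"
  by (simp add: send_letter_def fun_eq_iff)

lemma transvection_eq: "transvection V Adj (a, s) (b, False) = induced_map V Adj (transv_subst a s b)"
  by (simp add: transvection_def send_letter_False transv_subst_def)

lemma conj_one_eq: "conj_one V Adj (x, s) (c, False) = induced_map V Adj (conj_one_subst x s c)"
  by (simp add: conj_one_def send_letter_False conj_one_subst_def)

lemma comm_transvection_eq:
  "comm_transvection V Adj (x, s) (y, t) (c, False) = induced_map V Adj (comm_transv_subst x s y t c)"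
  by (simp add: comm_transvection_def send_letter_False comm_transv_subst_def)

lemma partial_conj_eq: "partial_conj V Adj (x, s) Y = induced_map V Adj (pconj_subst x s Y)"
  unfolding partial_conj_def pconj_subst_def by (simp cong: if_cong)

lemma inner_aut_eq: "inner_aut V Adj w = induced_map V Adj (inner_subst w)"
  by (simp add: inner_aut_def inner_subst_def)

section \<open>The right-angled Artin group\<close>

locale raag =
  fixes V :: "'v set" and Adj :: "'v \<Rightarrow> 'v \<Rightarrow> bool"
  assumes simple: "simple_graph V Adj"
begin

abbreviation raag_eq_infix (infix "\<doteq>" 50) where "u \<doteq> w \<equiv> raag_eq V Adj u w"

lemma adjD: "Adj u v \<Longrightarrow> u \<in> V \<and> v \<in> V \<and> u \<noteq> v \<and> Adj v u"
  using simple unfolding simple_graph_def by blast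

lemma raag_eq_refl [simp, intro]: "u \<doteq> u"
  unfolding raag_eq_def by simp

lemma raag_eq_trans [trans]: "u \<doteq> v \<Longrightarrow> v \<doteq> w \<Longrightarrow> u \<doteq> w"
  unfolding raag_eq_def by (rule rtranclp_trans)

lemma raag_eq_sym [sym]: "u \<doteq> v \<Longrightarrow> v \<doteq> u"
  unfolding raag_eq_def symclp_pointfree[symmetric] by (rule rtranclp_symclp_sym)

lemma raag_step_context: "raag_step V Adj u v \<Longrightarrow> raag_step V Adj (p @ u @ q) (p @ v @ q)"
proof (induction rule: raag_step.induct)
  case (cancel l u w)
  then show ?case using raag_step.cancel[where u = "p @ u" and w = "w @ q"] by simp
next
  case (commute l l' u w)
  then show ?case using raag_step.commute[where u = "p @ u" and w = "w @ q"] by simp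
qed

lemma raag_eq_context: "u \<doteq> v \<Longrightarrow> p @ u @ q \<doteq> p @ v @ q"
  unfolding raag_eq_def
proof (induction rule: rtranclp_induct)
  case (step y z)
  then have "(sup (raag_step V Adj) (raag_step V Adj)\<inverse>\<inverse>) (p @ y @ q) (p @ z @ q)"
    using raag_step_context by auto
  with step.IH show ?case by (meson rtranclp.rtrancl_into_rtrancl)
qed simp

lemma raag_eq_append: "u \<doteq> u' \<Longrightarrow> v \<doteq> v' \<Longrightarrow> u @ v \<doteq> u' @ v'"
  using raag_eq_context[of u u' "[]" v] raag_eq_context[of v v' u' "[]"] by (auto intro: raag_eq_trans)

lemma raag_eq_cancel: "fst l \<in> V \<Longrightarrow> p @ l # inv_letter l # q \<doteq> p @ q"
  unfolding raag_eq_def using raag_step.cancel[where l = l and u = p and w = q] by auto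

lemma raag_eq_swap: "Adj (fst l) (fst l') \<Longrightarrow> p @ l # l' # q \<doteq> p @ l' # l # q"
  unfolding raag_eq_def using raag_step.commute[where l = l and l' = l' and u = p and w = q] by auto

lemma words_simps [simp]:
  "[] \<in> words V"
  "l # w \<in> words V \<longleftrightarrow> fst l \<in> V \<and> w \<in> words V"
  "u @ w \<in> words V \<longleftrightarrow> u \<in> words V \<and> w \<in> words V"
  by (auto simp: words_def mem_Times_iff)

lemma inv_word_in_words [simp]: "inv_word w \<in> words V \<longleftrightarrow> w \<in> words V"
  by (induction w) (auto simp: inv_letter_def)

lemma raag_eq_cancel_word: "w \<in> words V \<Longrightarrow> p @ w @ inv_word w @ q \<doteq> p @ q"
proof (induction w arbitrary: q rule: rev_induct)
  case (snoc l w)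
  have "p @ (w @ [l]) @ inv_word (w @ [l]) @ q = (p @ w) @ l # inv_letter l # (inv_word w @ q)"
    by simp
  also have "\<dots> \<doteq> (p @ w) @ (inv_word w @ q)" using snoc.prems by (intro raag_eq_cancel) simp
  also have "\<dots> \<doteq> p @ q" using snoc by simp
  finally show ?case .
qed simp

lemma raag_eq_cancel_word': "w \<in> words V \<Longrightarrow> p @ inv_word w @ w @ q \<doteq> p @ q"
  using raag_eq_cancel_word[of "inv_word w" p q] by simp

lemma raag_eq_free_red: "w \<in> words V \<Longrightarrow> w \<doteq> free_red w"
proof (induction w)
  case (Cons l w)
  then have IH: "l # w \<doteq> l # free_red w" using raag_eq_context[of w _ "[l]" "[]"] by simp
  show ?case
  proof (cases "free_red w")
    case (Cons m r)
    moreover have "l # inv_letter l # r \<doteq> r"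
      using raag_eq_cancel[of l "[]" r] Cons.prems by simp
    ultimately show ?thesis using IH by (auto intro: raag_eq_trans)
  qed (use IH in simp)
qed simp

text \<open>Free reduction is only a sufficient criterion for equality in \<open>A\<^sub>\<Gamma>\<close>; together with an
  occasional explicit commutation it settles every generator computation below.\<close>
lemma raag_eq_if_free_red_eq:
  "p \<in> words V \<Longrightarrow> q \<in> words V \<Longrightarrow> free_red p = free_red q \<Longrightarrow> p \<doteq> q"
  using raag_eq_free_red raag_eq_sym raag_eq_trans by metis

definition commute_words :: "'v word \<Rightarrow> 'v word \<Rightarrow> bool" where
  "commute_words p q \<longleftrightarrow> p @ q \<doteq> q @ p"

lemma commute_words_sym: "commute_words p q \<Longrightarrow> commute_words q p"
  unfolding commute_words_def using raag_eq_sym by blast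

lemma commute_words_Nil: "commute_words p []"
  unfolding commute_words_def by simp

lemma commute_words_append:
  assumes "commute_words p q1" "commute_words p q2"
  shows "commute_words p (q1 @ q2)"
proof -
  have "p @ q1 @ q2 \<doteq> q1 @ p @ q2"
    using raag_eq_context[OF assms(1)[unfolded commute_words_def], of "[]" q2] by simp
  also have "\<dots> \<doteq> q1 @ q2 @ p"
    using raag_eq_context[OF assms(2)[unfolded commute_words_def], of q1 "[]"] by simp
  finally show ?thesis unfolding commute_words_def by simp
qed

lemma commute_words_inv_word:
  assumes "p \<in> words V" "q \<in> words V" "commute_words p q"
  shows "commute_words (inv_word p) q"
proof -
  have "inv_word p @ q \<doteq> inv_word p @ (q @ p) @ inv_word p"
    using raag_eq_sym[OF raag_eq_cancel_word[of p "inv_word p @ q" "[]"]] assms by simp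
  also have "\<dots> \<doteq> inv_word p @ (p @ q) @ inv_word p"
    using raag_eq_context[OF raag_eq_sym[OF assms(3)[unfolded commute_words_def]]] by blast
  also have "\<dots> \<doteq> q @ inv_word p"
    using raag_eq_cancel_word'[of p "[]" "q @ inv_word p"] assms by simp
  finally show ?thesis unfolding commute_words_def .
qed

lemma commute_words_letters:
  assumes "fst m \<in> st Adj (fst l)" "fst l \<in> V"
  shows "commute_words [l] [m]"
proof (cases "Adj (fst l) (fst m)")
  case True
  then show ?thesis using raag_eq_swap[of l m "[]" "[]"] by (simp add: commute_words_def)
next
  case False
  then have "fst m = fst l" using assms(1) by (simp add: st_def lk_def)
  then consider "m = l" | "m = inv_letter l" by (cases l; cases m) auto
  then show ?thesis
  proof cases
    case 2
    then have "[l, m] \<doteq> []" "[m, l] \<doteq> []"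
      using raag_eq_cancel[of l "[]" "[]"] raag_eq_cancel[of m "[]" "[]"] assms by (simp_all add: inv_letter_def)
    then show ?thesis unfolding commute_words_def by (auto intro: raag_eq_trans raag_eq_sym)
  qed (simp add: commute_words_def)
qed

lemma commute_words_if_st:
  assumes "p \<in> words V" "\<forall>l\<in>set p. \<forall>m\<in>set q. fst m \<in> st Adj (fst l)"
  shows "commute_words p q"
  using assms
proof (induction p)
  case Nil
  then show ?case using commute_words_sym commute_words_Nil by blast
next
  case (Cons l p)
  have "commute_words [l] q"
    using Cons.prems
    by (induction q) (auto simp: commute_words_Nil
        intro: commute_words_append[of "[l]" "[_]", simplified] commute_words_letters)
  moreover have "commute_words p q" using Cons by simp
  ultimately have "commute_words q ([l] @ p)"
    using commute_words_append commute_words_sym by blast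
  then show ?case using commute_words_sym by simp
qed

lemma commute_words_conj:
  assumes "commute_words p q" "w \<in> words V"
  shows "commute_words (inv_word w @ p @ w) (inv_word w @ q @ w)"
proof -
  have "(inv_word w @ p @ w) @ (inv_word w @ q @ w) \<doteq> inv_word w @ p @ q @ w"
    using raag_eq_cancel_word[OF assms(2), of "inv_word w @ p" "q @ w"] by simp
  also have "\<dots> \<doteq> inv_word w @ q @ p @ w"
    using raag_eq_context[OF assms(1)[unfolded commute_words_def], of "inv_word w" w] by simp
  also have "\<dots> \<doteq> (inv_word w @ q @ w) @ (inv_word w @ p @ w)"
    using raag_eq_sym[OF raag_eq_cancel_word[OF assms(2), of "inv_word w @ q" "p @ w"]] by simp
  finally show ?thesis unfolding commute_words_def .
qed

lemma conj_raag_eq_if_commute: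
  assumes "w \<in> words V" "fst l \<in> V" "commute_words w [l]"
  shows "inv_letter l # w @ [l] \<doteq> w"
proof -
  have "[inv_letter l] @ (w @ [l]) @ [] \<doteq> [inv_letter l] @ ([l] @ w) @ []"
    using assms(3) unfolding commute_words_def by (rule raag_eq_context)
  moreover have "inv_letter l # l # w \<doteq> w"
    using raag_eq_cancel[of "inv_letter l" "[]" w] assms(2) by (simp add: inv_letter_def)
  ultimately show ?thesis using raag_eq_trans by simp
qed

lemma raag_class_eq_iff: "raag_class V Adj u = raag_class V Adj v \<longleftrightarrow> u \<doteq> v"
proof
  assume "raag_class V Adj u = raag_class V Adj v"
  then show "u \<doteq> v" by (auto simp: raag_class_def)
next
  assume "u \<doteq> v"
  then show "raag_class V Adj u = raag_class V Adj v"
    unfolding raag_class_def by (auto intro: raag_eq_trans raag_eq_sym)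
qed

lemma RAAG_carrier: "carrier (RAAG V Adj) = raag_class V Adj ` words V"
  by (simp add: RAAG_def)

lemma RAAG_one: "\<one>\<^bsub>RAAG V Adj\<^esub> = raag_class V Adj []"
  by (simp add: RAAG_def)

lemma RAAG_mult:
  "raag_class V Adj u \<otimes>\<^bsub>RAAG V Adj\<^esub> raag_class V Adj v = raag_class V Adj (u @ v)"
proof -
  have "{w. \<exists>a\<in>raag_class V Adj u. \<exists>b\<in>raag_class V Adj v. a @ b \<doteq> w} = raag_class V Adj (u @ v)"
    by (auto simp: raag_class_def intro: raag_eq_trans raag_eq_append)
  then show ?thesis by (simp add: RAAG_def)
qed

lemma group_RAAG: "group (RAAG V Adj)"
proof (rule groupI)
  fix x assume "x \<in> carrier (RAAG V Adj)"
  then obtain w where w: "w \<in> words V" "x = raag_class V Adj w" by (auto simp: RAAG_carrier)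
  then have "raag_class V Adj (inv_word w) \<otimes>\<^bsub>RAAG V Adj\<^esub> x = \<one>\<^bsub>RAAG V Adj\<^esub>"
    using raag_eq_cancel_word'[of w "[]" "[]"] by (simp add: RAAG_mult RAAG_one raag_class_eq_iff)
  then show "\<exists>y\<in>carrier (RAAG V Adj). y \<otimes>\<^bsub>RAAG V Adj\<^esub> x = \<one>\<^bsub>RAAG V Adj\<^esub>"
    using w by (auto simp: RAAG_carrier)
qed (auto simp: RAAG_carrier RAAG_mult RAAG_one)

section \<open>Automorphisms induced by substitutions\<close>

definition admissible :: "('v \<Rightarrow> 'v word) \<Rightarrow> bool" where
  "admissible \<phi> \<longleftrightarrow> (\<forall>g\<in>V. \<phi> g \<in> words V) \<and> (\<forall>u v. Adj u v \<longrightarrow> commute_words (\<phi> u) (\<phi> v))"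

lemma subst_word_in_words:
  "\<forall>g\<in>V. \<phi> g \<in> words V \<Longrightarrow> w \<in> words V \<Longrightarrow> subst_word \<phi> w \<in> words V"
  by (induction w) auto

lemma admissible_subst_word_in_words:
  "admissible \<phi> \<Longrightarrow> w \<in> words V \<Longrightarrow> subst_word \<phi> w \<in> words V"
  using subst_word_in_words admissible_def by blast

lemma admissible_raag_step:
  assumes "admissible \<phi>" "raag_step V Adj u v"
  shows "subst_word \<phi> u \<doteq> subst_word \<phi> v"
  using assms(2)
proof (induction rule: raag_step.induct)
  case (cancel l u w)
  have "\<phi> (fst l) \<in> words V" using assms(1) cancel unfolding admissible_def by blast
  then show ?case
    using raag_eq_cancel_word[of "\<phi> (fst l)" "subst_word \<phi> u" "subst_word \<phi> w"]
      raag_eq_cancel_word'[of "\<phi> (fst l)" "subst_word \<phi> u" "subst_word \<phi> w"]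
    by (auto simp: inv_letter_def)
next
  case (commute l l' u w)
  have w: "\<phi> (fst l) \<in> words V" "\<phi> (fst l') \<in> words V"
    and c: "commute_words (\<phi> (fst l)) (\<phi> (fst l'))"
    using assms(1) commute adjD unfolding admissible_def by blast+
  have "commute_words (letter_image \<phi> l) (letter_image \<phi> l')"
    using c commute_words_inv_word[OF w c]
      commute_words_inv_word[OF w(2,1) commute_words_sym[OF c]]
      commute_words_inv_word[of "\<phi> (fst l')" "inv_word (\<phi> (fst l))"] w
    by (auto intro: commute_words_sym)
  from raag_eq_context[OF this[unfolded commute_words_def], of "subst_word \<phi> u" "subst_word \<phi> w"]
  show ?case by simp
qed

lemma admissible_raag_eq:
  assumes "admissible \<phi>" "u \<doteq> v"
  shows "subst_word \<phi> u \<doteq> subst_word \<phi> v"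
  using assms(2) unfolding raag_eq_def
proof (induction rule: rtranclp_induct)
  case (step y z)
  then have "subst_word \<phi> y \<doteq> subst_word \<phi> z"
    using admissible_raag_step[OF assms(1)] raag_eq_sym by blast
  with step.IH show ?case using raag_eq_trans unfolding raag_eq_def by blast
qed simp

lemma subst_word_cong:
  assumes "\<forall>g\<in>V. \<phi> g \<doteq> \<psi> g" "\<forall>g\<in>V. \<phi> g \<in> words V" "\<forall>g\<in>V. \<psi> g \<in> words V"
    and "w \<in> words V"
  shows "subst_word \<phi> w \<doteq> subst_word \<psi> w"
  using assms(4)
proof (induction w)
  case (Cons l w)
  let ?p = "\<phi> (fst l)" and ?q = "\<psi> (fst l)"
  have pq: "?p \<in> words V" "?q \<in> words V" "?p \<doteq> ?q" using assms Cons.prems by auto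
  have "inv_word ?p \<doteq> inv_word ?p @ ?q @ inv_word ?q"
    using raag_eq_sym[OF raag_eq_cancel_word[OF pq(2), of "inv_word ?p" "[]"]] by simp
  also have "\<dots> \<doteq> inv_word ?p @ ?p @ inv_word ?q"
    using raag_eq_context[OF raag_eq_sym[OF pq(3)], of "inv_word ?p" "inv_word ?q"] by simp
  also have "\<dots> \<doteq> inv_word ?q" using raag_eq_cancel_word'[OF pq(1), of "[]"] by simp
  finally have "letter_image \<phi> l \<doteq> letter_image \<psi> l" using pq by simp
  then show ?case using Cons raag_eq_append by simp
qed simp

abbreviation ind :: "('v \<Rightarrow> 'v word) \<Rightarrow> 'v word set \<Rightarrow> 'v word set" where
  "ind \<phi> \<equiv> induced_map V Adj \<phi>"

lemma induced_map_class:
  assumes "admissible \<phi>" "w \<in> words V"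
  shows "ind \<phi> (raag_class V Adj w) = raag_class V Adj (subst_word \<phi> w)"
proof -
  have "raag_class V Adj w \<in> carrier (RAAG V Adj)" using assms by (simp add: RAAG_carrier)
  then show ?thesis
    using admissible_raag_eq[OF assms(1)]
    by (auto simp: induced_map_def raag_class_def intro: raag_eq_trans)
qed

lemma induced_map_hom: "admissible \<phi> \<Longrightarrow> ind \<phi> \<in> hom (RAAG V Adj) (RAAG V Adj)"
  unfolding hom_def
  by (auto simp: RAAG_carrier RAAG_mult induced_map_class admissible_subst_word_in_words)

lemma induced_map_outside: "A \<notin> carrier (RAAG V Adj) \<Longrightarrow> ind \<phi> A = undefined"
  by (simp add: induced_map_def)

lemma induced_map_eqI:
  assumes "\<And>w. w \<in> words V \<Longrightarrow> ind \<phi> (raag_class V Adj w) = ind \<psi> (raag_class V Adj w)"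
  shows "ind \<phi> = ind \<psi>"
proof
  fix A
  show "ind \<phi> A = ind \<psi> A"
    using assms by (cases "A \<in> carrier (RAAG V Adj)") (auto simp: RAAG_carrier induced_map_outside)
qed

lemma admissible_comp:
  assumes "admissible \<phi>" "admissible \<psi>"
  shows "admissible (\<lambda>g. subst_word \<phi> (\<psi> g))"
  using assms admissible_raag_eq[OF assms(1), of "\<psi> _ @ \<psi> _" "\<psi> _ @ \<psi> _"]
  unfolding admissible_def commute_words_def by (auto simp: subst_word_in_words)

lemma admissible_generators: "admissible (\<lambda>g. [(g, False)])"
  unfolding admissible_def using commute_words_letters adjD by (auto simp: st_def lk_def)

lemma induced_map_comp:
  assumes "admissible \<phi>" "admissible \<psi>"
  shows "compose (carrier (RAAG V Adj)) (ind \<phi>) (ind \<psi>) = ind (\<lambda>g. subst_word \<phi> (\<psi> g))"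
proof (rule ext)
  fix A
  show "compose (carrier (RAAG V Adj)) (ind \<phi>) (ind \<psi>) A = ind (\<lambda>g. subst_word \<phi> (\<psi> g)) A"
    using assms admissible_comp[OF assms]
    by (cases "A \<in> carrier (RAAG V Adj)")
      (auto simp: RAAG_carrier compose_def induced_map_class admissible_subst_word_in_words
        subst_word_subst_word induced_map_outside)
qed

lemma induced_map_generators: "ind (\<lambda>g. [(g, False)]) = (\<lambda>A\<in>carrier (RAAG V Adj). A)"
proof (rule ext)
  fix A
  show "ind (\<lambda>g. [(g, False)]) A = (\<lambda>A\<in>carrier (RAAG V Adj). A) A"
    using admissible_generators
    by (cases "A \<in> carrier (RAAG V Adj)")
      (auto simp: RAAG_carrier induced_map_class subst_word_generators induced_map_outside)
qed

lemma induced_map_cong: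
  assumes "\<forall>g\<in>V. \<phi> g \<doteq> \<psi> g" "admissible \<phi>" "admissible \<psi>"
  shows "ind \<phi> = ind \<psi>"
  using assms subst_word_cong[OF assms(1)]
  by (intro induced_map_eqI) (simp add: induced_map_class raag_class_eq_iff admissible_def)

abbreviation Aut :: "('v word set \<Rightarrow> 'v word set) monoid" where
  "Aut \<equiv> AutRAAG V Adj"

lemma group_Aut: "group Aut"
  using group.AutoGroup[OF group_RAAG] .

lemma Aut_carrier: "carrier Aut = auto (RAAG V Adj)"
  by (simp add: AutoGroup_def)

lemma Aut_mult:
  "f \<in> carrier Aut \<Longrightarrow> g \<in> carrier Aut \<Longrightarrow> f \<otimes>\<^bsub>Aut\<^esub> g = compose (carrier (RAAG V Adj)) f g"
  by (simp add: AutoGroup_def BijGroup_def auto_def)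

lemma Aut_one: "\<one>\<^bsub>Aut\<^esub> = (\<lambda>A\<in>carrier (RAAG V Adj). A)"
  by (simp add: AutoGroup_def BijGroup_def)

lemma Aut_r_one: "f \<in> carrier Aut \<Longrightarrow> f \<otimes>\<^bsub>Aut\<^esub> \<one>\<^bsub>Aut\<^esub> = f"
  by (rule monoid.r_one[OF group.is_monoid[OF group_Aut]])

lemma Aut_one_closed: "\<one>\<^bsub>Aut\<^esub> \<in> carrier Aut"
  by (rule monoid.one_closed[OF group.is_monoid[OF group_Aut]])

lemma induced_map_mult:
  assumes "admissible \<phi>" "admissible \<psi>" "ind \<phi> \<in> carrier Aut" "ind \<psi> \<in> carrier Aut"
  shows "ind \<phi> \<otimes>\<^bsub>Aut\<^esub> ind \<psi> = ind (\<lambda>g. subst_word \<phi> (\<psi> g))"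
  using Aut_mult[OF assms(3,4)] induced_map_comp[OF assms(1,2)] by simp

definition inverse_substs :: "('v \<Rightarrow> 'v word) \<Rightarrow> ('v \<Rightarrow> 'v word) \<Rightarrow> bool" where
  "inverse_substs \<phi> \<psi> \<longleftrightarrow> admissible \<phi> \<and> admissible \<psi> \<and>
     (\<forall>g\<in>V. subst_word \<phi> (\<psi> g) \<doteq> [(g, False)]) \<and> (\<forall>g\<in>V. subst_word \<psi> (\<phi> g) \<doteq> [(g, False)])"

definition invertible_subst :: "('v \<Rightarrow> 'v word) \<Rightarrow> bool" where
  "invertible_subst \<phi> \<longleftrightarrow> (\<exists>\<psi>. inverse_substs \<phi> \<psi>)"

lemma inverse_substs_comp_eq_one:
  assumes "inverse_substs \<phi> \<psi>"
  shows "compose (carrier (RAAG V Adj)) (ind \<phi>) (ind \<psi>) = \<one>\<^bsub>Aut\<^esub>"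
  using assms induced_map_comp admissible_comp admissible_generators
    induced_map_cong[of "\<lambda>g. subst_word \<phi> (\<psi> g)" "\<lambda>g. [(g, False)]"]
  unfolding inverse_substs_def by (simp add: induced_map_generators Aut_one)

lemma inverse_substs_sym: "inverse_substs \<phi> \<psi> \<Longrightarrow> inverse_substs \<psi> \<phi>"
  unfolding inverse_substs_def by blast

lemma inverse_substs_in_Aut:
  assumes "inverse_substs \<phi> \<psi>"
  shows "ind \<phi> \<in> carrier Aut"
proof -
  let ?F = "ind \<phi>" and ?G = "ind \<psi>" and ?A = "carrier (RAAG V Adj)"
  have FG: "?F (?G A) = A" and GF: "?G (?F A) = A" if "A \<in> ?A" for A
    using fun_cong[OF inverse_substs_comp_eq_one[OF assms], of A]
      fun_cong[OF inverse_substs_comp_eq_one[OF inverse_substs_sym[OF assms]], of A] that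
    by (simp_all add: compose_def Aut_one)
  have hom: "?F \<in> hom (RAAG V Adj) (RAAG V Adj)" "?G \<in> hom (RAAG V Adj) (RAAG V Adj)"
    using assms induced_map_hom unfolding inverse_substs_def by blast+
  then have "bij_betw ?F ?A ?A"
    by (intro bij_betwI[of _ _ _ ?G] FG GF) (auto simp: hom_def)
  with hom show ?thesis by (simp add: Aut_carrier auto_def Bij_def induced_map_def)
qed

lemma inverse_substs_inv:
  assumes "inverse_substs \<phi> \<psi>"
  shows "inv\<^bsub>Aut\<^esub> ind \<phi> = ind \<psi>"
  using group.inv_equality[OF group_Aut] assms inverse_substs_sym[OF assms]
    inverse_substs_in_Aut inverse_substs_comp_eq_one Aut_mult
  by metis

lemma invertible_substD: "invertible_subst \<phi> \<Longrightarrow> admissible \<phi> \<and> ind \<phi> \<in> carrier Aut"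
  unfolding invertible_subst_def inverse_substs_def
  using inverse_substs_in_Aut inverse_substs_def by blast

lemma conj_induced_map:
  assumes "inverse_substs \<tau> \<tau>'" "invertible_subst \<phi>" "admissible \<psi>"
    and "\<forall>g\<in>V. subst_word \<tau> (subst_word \<phi> (\<tau>' g)) \<doteq> \<psi> g"
  shows "ind \<tau> \<otimes>\<^bsub>Aut\<^esub> ind \<phi> \<otimes>\<^bsub>Aut\<^esub> inv\<^bsub>Aut\<^esub> ind \<tau> = ind \<psi>"
proof -
  have \<tau>: "admissible \<tau>" "admissible \<tau>'" "ind \<tau> \<in> carrier Aut" "ind \<tau>' \<in> carrier Aut"
    using assms(1) inverse_substs_in_Aut inverse_substs_sym unfolding inverse_substs_def by blast+
  have \<phi>: "admissible \<phi>" "ind \<phi> \<in> carrier Aut" using invertible_substD[OF assms(2)] by blast+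
  have "ind \<tau> \<otimes>\<^bsub>Aut\<^esub> ind \<phi> \<otimes>\<^bsub>Aut\<^esub> inv\<^bsub>Aut\<^esub> ind \<tau>
      = ind (\<lambda>g. subst_word (\<lambda>h. subst_word \<tau> (\<phi> h)) (\<tau>' g))"
    using induced_map_mult[OF \<tau>(1) \<phi>(1) \<tau>(3) \<phi>(2)] inverse_substs_inv[OF assms(1)]
      induced_map_mult[OF admissible_comp[OF \<tau>(1) \<phi>(1)] \<tau>(2) _ \<tau>(4)]
      monoid.m_closed[OF group.is_monoid[OF group_Aut] \<tau>(3) \<phi>(2)]
    by simp
  also have "\<dots> = ind \<psi>"
    using assms(3,4) \<tau> \<phi>
    by (intro induced_map_cong admissible_comp) (auto simp: subst_word_subst_word[symmetric])
  finally show ?thesis .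
qed

lemma conj_induced_map_mult:
  assumes "inverse_substs \<tau> \<tau>'" "invertible_subst \<phi>" "invertible_subst \<psi>\<^sub>1" "invertible_subst \<psi>\<^sub>2"
    and "\<forall>g\<in>V. subst_word \<tau> (subst_word \<phi> (\<tau>' g)) \<doteq> subst_word \<psi>\<^sub>1 (\<psi>\<^sub>2 g)"
  shows "ind \<tau> \<otimes>\<^bsub>Aut\<^esub> ind \<phi> \<otimes>\<^bsub>Aut\<^esub> inv\<^bsub>Aut\<^esub> ind \<tau> = ind \<psi>\<^sub>1 \<otimes>\<^bsub>Aut\<^esub> ind \<psi>\<^sub>2"
  using conj_induced_map[OF assms(1,2) _ assms(5)] invertible_substD[OF assms(3)]
    invertible_substD[OF assms(4)] induced_map_mult admissible_comp
  by simp

section \<open>Graph combinatorics\<close>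

lemma dominatesD: "dominates Adj a b \<Longrightarrow> Adj b v \<Longrightarrow> v \<in> st Adj a"
  unfolding dominates_def lk_def by auto

lemma adj_in_st: "Adj b v \<Longrightarrow> v \<in> st Adj b"
  by (simp add: st_def lk_def)

lemma union_of_components_subset: "union_of_components V Adj x Y \<Longrightarrow> Y \<subseteq> V - st Adj x"
  unfolding union_of_components_def by blast

lemma union_of_components_step:
  assumes "union_of_components V Adj x Y" "p \<in> Y" "q \<in> V - st Adj x" "Adj p q"
  shows "q \<in> Y"
proof -
  have "(\<lambda>s t. s \<in> V - st Adj x \<and> t \<in> V - st Adj x \<and> Adj s t)\<^sup>*\<^sup>* p q"
    using assms union_of_components_subset by blast
  then show ?thesis using assms unfolding union_of_components_def by blast
qed

lemma union_of_components_boundary: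
  assumes "union_of_components V Adj x Y" "p \<in> Y" "Adj p q" "q \<notin> Y"
  shows "Adj x q"
proof -
  have p: "p \<in> V - st Adj x" using assms union_of_components_subset by blast
  then have "q \<in> st Adj x" using union_of_components_step[OF assms(1,2) _ assms(3)] assms(4) adjD[OF assms(3)] by blast
  moreover have "q \<noteq> x" using p adjD[OF assms(3)] by (auto simp: st_def lk_def)
  ultimately show ?thesis by (simp add: st_def lk_def)
qed

lemma union_of_components_adj_iff:
  assumes "union_of_components V Adj x Y" "p \<notin> st Adj x" "q \<notin> st Adj x" "Adj p q"
  shows "p \<in> Y \<longleftrightarrow> q \<in> Y"
  using union_of_components_step[OF assms(1)] assms(2-4) adjD[OF assms(4)] by blast

lemma dominates_trans:
  assumes "dominates Adj x y" "dominates Adj y z" "x \<noteq> y" "x \<noteq> z"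
  shows "dominates Adj x z"
  using assms adjD unfolding dominates_def st_def lk_def by blast

text \<open>A neighbour of \<open>b\<close> outside \<open>st(x)\<close> would join the components of \<open>a\<close> and \<open>b\<close>
  in \<open>\<Gamma> - st(x)\<close>.\<close>
lemma dominates_if_separated:
  assumes Y: "union_of_components V Adj x Y" and ab: "dominates Adj a b"
    and "b \<noteq> x" "a \<notin> st Adj x" "(b \<in> Y) \<noteq> (a \<in> Y)"
  shows "dominates Adj x b"
proof -
  have b: "b \<notin> st Adj x"
  proof
    assume "b \<in> st Adj x"
    then have "Adj b x" using \<open>b \<noteq> x\<close> adjD by (auto simp: st_def lk_def)
    then have "x \<in> st Adj a" using dominatesD[OF ab] by blast
    then show False using \<open>a \<notin> st Adj x\<close> adjD by (auto simp: st_def lk_def)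
  qed
  show ?thesis unfolding dominates_def
  proof
    fix y assume "y \<in> lk Adj b"
    then have b_y: "Adj b y" by (simp add: lk_def)
    show "y \<in> st Adj x"
    proof (rule ccontr)
      assume y: "y \<notin> st Adj x"
      have "b \<in> Y \<longleftrightarrow> y \<in> Y" using union_of_components_adj_iff[OF Y b y b_y] .
      moreover have "y \<in> Y \<longleftrightarrow> a \<in> Y"
        using dominatesD[OF ab b_y] union_of_components_adj_iff[OF Y _ y] assms(4) adjD
        by (auto simp: st_def lk_def)
      ultimately show False using assms(5) by simp
    qed
  qed
qed

lemma union_of_components_diff_st:
  assumes Y: "union_of_components V Adj x Y" and ax: "dominates Adj a x" and "x \<in> V"
    and W: "Y \<subseteq> W" "W \<subseteq> insert x Y"
  shows "union_of_components V Adj a (W - st Adj a)"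
proof -
  have "q \<in> W - st Adj a"
    if "p \<in> W - st Adj a" "(\<lambda>s t. s \<in> V - st Adj a \<and> t \<in> V - st Adj a \<and> Adj s t)\<^sup>*\<^sup>* p q"
    for p q
    using that(2,1)
  proof (induction rule: rtranclp_induct)
    case (step r q)
    then have r: "r \<in> W - st Adj a" and q: "q \<in> V - st Adj a" "Adj r q" by auto
    have "q \<notin> lk Adj x" using q ax unfolding dominates_def by auto
    then have "r \<noteq> x" using q by (auto simp: lk_def)
    then have "r \<in> Y" using r W by auto
    then have "q \<noteq> x" using q adjD union_of_components_subset[OF Y] by (auto simp: st_def lk_def)
    with \<open>q \<notin> lk Adj x\<close> have "q \<in> V - st Adj x" using q by (auto simp: st_def)
    then have "q \<in> Y" using union_of_components_step[OF Y \<open>r \<in> Y\<close> _ q(2)] by blast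
    then show ?case using q W by auto
  qed simp
  moreover have "W - st Adj a \<subseteq> V - st Adj a"
    using union_of_components_subset[OF Y] W \<open>x \<in> V\<close> by blast
  ultimately show ?thesis unfolding union_of_components_def by blast
qed

section \<open>The elementary automorphisms\<close>

lemma admissible_send:
  assumes "b \<in> V" "w \<in> words V" "\<And>v l. Adj b v \<Longrightarrow> l \<in> set w \<Longrightarrow> v \<in> st Adj (fst l)"
  shows "admissible (\<lambda>g. if g = b then w else [(g, False)])"
  unfolding admissible_def
proof (intro conjI allI impI)
  fix u v assume uv: "Adj u v"
  have gens: "commute_words [(u, False)] [(v, False)]"
    using uv adjD[OF uv] by (intro commute_words_letters) (auto simp: st_def lk_def)
  have "commute_words w [(v, False)]" if "u = b"
    using assms uv that by (intro commute_words_if_st) auto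
  moreover have "commute_words w [(u, False)]" if "v = b"
    using assms adjD[OF uv] that by (intro commute_words_if_st) auto
  ultimately show "commute_words (if u = b then w else [(u, False)]) (if v = b then w else [(v, False)])"
    using gens adjD[OF uv] commute_words_sym by auto
qed (use assms in auto)

lemma admissible_transv_subst:
  "a \<in> V \<Longrightarrow> b \<in> V \<Longrightarrow> dominates Adj a b \<Longrightarrow> admissible (transv_subst a s b)"
  unfolding transv_subst_def by (intro admissible_send) (auto dest: dominatesD adj_in_st)

lemma admissible_conj_one_subst:
  "x \<in> V \<Longrightarrow> c \<in> V \<Longrightarrow> dominates Adj x c \<Longrightarrow> admissible (conj_one_subst x s c)"
  unfolding conj_one_subst_def by (intro admissible_send) (auto dest: dominatesD adj_in_st)

lemma admissible_comm_transv_subst: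
  "x \<in> V \<Longrightarrow> y \<in> V \<Longrightarrow> c \<in> V \<Longrightarrow> dominates Adj x c \<Longrightarrow> dominates Adj y c
    \<Longrightarrow> admissible (comm_transv_subst x s y t c)"
  unfolding comm_transv_subst_def by (intro admissible_send) (auto dest: dominatesD adj_in_st)

lemma admissible_inner_subst:
  assumes "w \<in> words V"
  shows "admissible (inner_subst w)"
  unfolding admissible_def inner_subst_def
proof (intro conjI allI impI)
  fix u v assume "Adj u v"
  then have "commute_words [(u, False)] [(v, False)]"
    using adjD by (intro commute_words_letters) (auto simp: st_def lk_def)
  from commute_words_conj[OF this assms]
  show "commute_words (inv_word w @ [(u, False)] @ w) (inv_word w @ [(v, False)] @ w)" .
qed (use assms in auto)

lemma admissible_pconj_subst:
  assumes "x \<in> V" "union_of_components V Adj x Y"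
  shows "admissible (pconj_subst x s Y)"
  unfolding admissible_def
proof (intro conjI allI impI)
  show "\<forall>g\<in>V. pconj_subst x s Y g \<in> words V"
    using assms union_of_components_subset by (auto simp: pconj_subst_def)
next
  fix u v assume uv: "Adj u v"
  have gens: "commute_words [(u, False)] [(v, False)]"
    using uv adjD[OF uv] by (intro commute_words_letters) (auto simp: st_def lk_def)
  have conj: "commute_words [(x, \<not> s), (u, False), (x, s)] [(v, False)]"
    if "Adj x v" "Adj u v" for u v
    using that adjD assms(1) by (intro commute_words_if_st) (auto simp: st_def lk_def)
  consider "u \<in> Y" "v \<in> Y" | "u \<in> Y" "v \<notin> Y" | "u \<notin> Y" "v \<in> Y" | "u \<notin> Y" "v \<notin> Y"
    by blast
  then show "commute_words (pconj_subst x s Y u) (pconj_subst x s Y v)"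
  proof cases
    case 1
    then show ?thesis using commute_words_conj[OF gens, of "[(x, s)]"] assms(1)
      by (simp add: pconj_subst_def)
  next
    case 2
    then show ?thesis using conj[OF _ uv] union_of_components_boundary[OF assms(2) _ uv]
      by (simp add: pconj_subst_def)
  next
    case 3
    have vu: "Adj v u" using adjD[OF uv] by blast
    then have "Adj x u" using union_of_components_boundary[OF assms(2) 3(2) _ 3(1)] by blast
    with vu show ?thesis using 3 commute_words_sym[OF conj] by (simp add: pconj_subst_def)
  qed (use gens in \<open>simp add: pconj_subst_def\<close>)
qed

lemma inverse_transv_subst:
  assumes "a \<in> V" "b \<in> V" "a \<noteq> b" "dominates Adj a b"
  shows "inverse_substs (transv_subst a s b) (transv_subst a (\<not> s) b)"
  unfolding inverse_substs_def using assms
  by (auto simp: admissible_transv_subst intro!: raag_eq_if_free_red_eq) (auto simp: transv_subst_def)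

lemma invertible_conj_one_subst:
  assumes "x \<in> V" "c \<in> V" "x \<noteq> c" "dominates Adj x c"
  shows "invertible_subst (conj_one_subst x s c)"
  unfolding invertible_subst_def inverse_substs_def using assms
  by (intro exI[of _ "conj_one_subst x (\<not> s) c"])
    (auto simp: admissible_conj_one_subst intro!: raag_eq_if_free_red_eq, auto simp: conj_one_subst_def)

lemma invertible_comm_transv_subst:
  assumes "x \<in> V" "y \<in> V" "c \<in> V" "distinct [x, y, c]" "dominates Adj x c" "dominates Adj y c"
  shows "invertible_subst (comm_transv_subst x s y t c)"
  unfolding invertible_subst_def inverse_substs_def using assms
  by (intro exI[of _ "comm_transv_subst y t x s c"])
    (auto simp: admissible_comm_transv_subst intro!: raag_eq_if_free_red_eq,
      auto simp: comm_transv_subst_def)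

lemma invertible_pconj_subst:
  assumes "x \<in> V" "union_of_components V Adj x Y"
  shows "invertible_subst (pconj_subst x s Y)"
proof -
  have "Y \<subseteq> V" "x \<notin> Y" using union_of_components_subset[OF assms(2)] by (auto simp: st_def)
  then show ?thesis
    unfolding invertible_subst_def inverse_substs_def using assms
    by (intro exI[of _ "pconj_subst x (\<not> s) Y"])
      (auto simp: admissible_pconj_subst intro!: raag_eq_if_free_red_eq, auto simp: pconj_subst_def)
qed

lemma invertible_inner_subst_letter:
  assumes "v \<in> V"
  shows "invertible_subst (inner_subst [(v, s)])"
proof -
  have "admissible (inner_subst [(v, s')])" for s'
    using assms by (intro admissible_inner_subst) simp
  then show ?thesis
    unfolding invertible_subst_def inverse_substs_def using assms
    by (intro exI[of _ "inner_subst [(v, \<not> s)]"])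
      (auto intro!: raag_eq_if_free_red_eq, auto simp: inner_subst_def)
qed

lemma K_sub_mult: "f \<in> K_sub V Adj Z \<Longrightarrow> g \<in> K_sub V Adj Z \<Longrightarrow> f \<otimes>\<^bsub>Aut\<^esub> g \<in> K_sub V Adj Z"
  unfolding K_sub_def by (rule generate.eng)

lemma K_sub_one: "\<one>\<^bsub>Aut\<^esub> \<in> K_sub V Adj Z"
  unfolding K_sub_def by (rule generate.one)

lemma conj_one_in_K_sub:
  assumes "x \<in> Z" "c \<in> Z" "x \<noteq> c" "dominates Adj x c"
  shows "ind (conj_one_subst x s c) \<in> K_sub V Adj Z"
proof -
  have "conj_one V Adj (x, s) (c, False) \<in> K_gens V Adj Z"
    unfolding K_gens_def using assms
    by (intro UnI1 UnI2 CollectI exI[of _ "(x, s)"] exI[of _ "(c, False)"]) simp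
  then show ?thesis unfolding K_sub_def conj_one_eq by (rule generate.incl)
qed

lemma comm_transv_in_K_sub:
  assumes "x \<in> Z" "y \<in> Z" "c \<in> Z" "distinct [x, y, c]" "dominates Adj x c" "dominates Adj y c"
  shows "ind (comm_transv_subst x s y t c) \<in> K_sub V Adj Z"
proof -
  have "comm_transvection V Adj (x, s) (y, t) (c, False) \<in> K_gens V Adj Z"
    unfolding K_gens_def using assms
    by (intro UnI1 CollectI exI[of _ "(x, s)"] exI[of _ "(y, t)"] exI[of _ "(c, False)"]) simp
  then show ?thesis unfolding K_sub_def comm_transvection_eq by (rule generate.incl)
qed

lemma inner_in_K_sub: "w \<in> words V \<Longrightarrow> ind (inner_subst w) \<in> K_sub V Adj Z"
  unfolding K_sub_def inner_aut_eq[symmetric] by (rule generate.incl) (auto simp: K_gens_def)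

section \<open>Conjugation by a transvection\<close>

abbreviation transv_conj :: "'v \<Rightarrow> 'v \<Rightarrow> ('v word set \<Rightarrow> 'v word set) \<Rightarrow> 'v word set \<Rightarrow> 'v word set"
  where "transv_conj a b F \<equiv>
    ind (transv_subst a False b) \<otimes>\<^bsub>Aut\<^esub> F \<otimes>\<^bsub>Aut\<^esub> inv\<^bsub>Aut\<^esub> ind (transv_subst a False b)"

lemma transv_conj_inner_in_K_sub:
  assumes "a \<in> V" "b \<in> V" "x \<in> V" "dominates Adj a b" "a \<noteq> b"
  shows "transv_conj a b (ind (inner_subst [(x, False)])) \<in> K_sub V Adj Z"
proof -
  have "transv_conj a b (ind (inner_subst [(x, False)])) = ind (inner_subst (transv_subst a False b x))"
    using assms
    by (intro conj_induced_map[OF inverse_transv_subst] invertible_inner_subst_letter admissible_inner_subst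
        ballI raag_eq_if_free_red_eq)
      (auto simp: transv_subst_def inner_subst_def)
  then show ?thesis using assms inner_in_K_sub by (simp add: transv_subst_def)
qed

lemma transv_conj_conj_one_in_K_sub:
  assumes V: "a \<in> V" "b \<in> V" "c \<in> V" "x \<in> V"
    and ab: "dominates Adj a b" "a \<noteq> b" and xc: "dominates Adj x c" "x \<noteq> c"
  shows "transv_conj a b (ind (conj_one_subst x False c)) \<in> K_sub V Adj {a, b, c, x}"
proof -
  note T = inverse_transv_subst[OF V(1,2) ab(2,1), of False, simplified]
  note invertible = invertible_conj_one_subst invertible_comm_transv_subst
  note K = conj_one_in_K_sub comm_transv_in_K_sub
  consider "b = c \<and> x = a \<or> b \<noteq> c \<and> b \<noteq> x \<and> a \<noteq> c" | "b = c" "x \<noteq> a"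
    | "b = x" "c = a" | "b = x" "c \<noteq> a" | "b \<noteq> c" "b \<noteq> x" "a = c"
    by blast
  then show ?thesis
  proof cases
    case 1
    then have "transv_conj a b (ind (conj_one_subst x False c)) = ind (conj_one_subst x False c)"
      using assms
      by (intro conj_induced_map[OF T] invertible admissible_conj_one_subst ballI
          raag_eq_if_free_red_eq)
        (auto simp: transv_subst_def conj_one_subst_def)
    then show ?thesis using assms by (simp add: K)
  next
    case 2
    then have "transv_conj a b (ind (conj_one_subst x False c))
        = ind (conj_one_subst x False c) \<otimes>\<^bsub>Aut\<^esub> ind (comm_transv_subst x False a True b)"
      using assms
      by (intro conj_induced_map_mult[OF T] invertible ballI raag_eq_if_free_red_eq)
        (auto simp: transv_subst_def conj_one_subst_def comm_transv_subst_def)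
    then show ?thesis using assms 2 by (simp add: K K_sub_mult)
  next
    case 3
    then have "transv_conj a b (ind (conj_one_subst x False c))
        = ind (conj_one_subst a False x) \<otimes>\<^bsub>Aut\<^esub> ind (conj_one_subst x False c)"
      using assms
      by (intro conj_induced_map_mult[OF T] invertible ballI raag_eq_if_free_red_eq)
        (auto simp: transv_subst_def conj_one_subst_def)
    then show ?thesis using assms 3 by (simp add: K K_sub_mult)
  next
    case 4
    then have ac: "dominates Adj a c" using dominates_trans[of a x c] assms by simp
    with 4 have "transv_conj a b (ind (conj_one_subst x False c))
        = ind (conj_one_subst x False c) \<otimes>\<^bsub>Aut\<^esub> ind (conj_one_subst a False c)"
      using assms
      by (intro conj_induced_map_mult[OF T] invertible ballI raag_eq_if_free_red_eq)
        (auto simp: transv_subst_def conj_one_subst_def)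
    then show ?thesis using assms 4 ac by (simp add: K K_sub_mult)
  next
    case 5
    then have xb: "dominates Adj x b" using dominates_trans[of x a b] assms by simp
    with 5 have "transv_conj a b (ind (conj_one_subst x False c))
        = ind (comm_transv_subst a True x False b) \<otimes>\<^bsub>Aut\<^esub> ind (conj_one_subst x False c)"
      using assms
      by (intro conj_induced_map_mult[OF T] invertible ballI raag_eq_if_free_red_eq)
        (auto simp: transv_subst_def conj_one_subst_def comm_transv_subst_def)
    then show ?thesis using assms 5 xb by (simp add: K K_sub_mult)
  qed
qed

lemma transv_conj_pconj_eq_pconj:
  assumes V: "a \<in> V" "b \<in> V" "x \<in> V" and ab: "dominates Adj a b" "a \<noteq> b"
    and Y: "union_of_components V Adj x Y" and "b \<noteq> x"
    and sep: "a \<in> st Adj x \<or> (b \<in> Y \<longleftrightarrow> a \<in> Y)"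
  shows "transv_conj a b (ind (pconj_subst x False Y)) = ind (pconj_subst x False Y)"
proof -
  have Ys: "Y \<subseteq> V" "x \<notin> Y" "a \<in> Y \<Longrightarrow> \<not> Adj x a"
    using union_of_components_subset[OF Y] by (auto simp: st_def lk_def)
  have "\<forall>g\<in>V. subst_word (transv_subst a False b)
      (subst_word (pconj_subst x False Y) (transv_subst a True b g)) \<doteq> pconj_subst x False Y g"
  proof
    fix g assume "g \<in> V"
    show "subst_word (transv_subst a False b)
      (subst_word (pconj_subst x False Y) (transv_subst a True b g)) \<doteq> pconj_subst x False Y g"
    proof (cases "g = b \<and> b \<in> Y \<and> a \<notin> Y \<and> Adj x a")
      case True
      then have "subst_word (transv_subst a False b)
          (subst_word (pconj_subst x False Y) (transv_subst a True b g))
          = [(x, True), (b, False)] @ (a, False) # (x, False) # [(a, True)]"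
        using \<open>b \<noteq> x\<close> Ys ab by (auto simp: transv_subst_def pconj_subst_def)
      also have "\<dots> \<doteq> [(x, True), (b, False)] @ (x, False) # (a, False) # [(a, True)]"
        using True adjD by (intro raag_eq_swap) auto
      also have "\<dots> \<doteq> pconj_subst x False Y g"
        using True V by (intro raag_eq_if_free_red_eq) (auto simp: pconj_subst_def)
      finally show ?thesis .
    next
      case False
      then show ?thesis
        using V \<open>g \<in> V\<close> \<open>b \<noteq> x\<close> sep Ys ab
        by (intro raag_eq_if_free_red_eq) (auto simp: transv_subst_def pconj_subst_def st_def lk_def)
    qed
  qed
  then show ?thesis
    using assms
    by (intro conj_induced_map[OF inverse_transv_subst[where s = False, simplified]]
        invertible_pconj_subst admissible_pconj_subst)
qed

lemma transv_conj_pconj_separated_in: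
  assumes V: "a \<in> V" "b \<in> V" "x \<in> V" and ab: "dominates Adj a b" "a \<noteq> b"
    and Y: "union_of_components V Adj x Y" and xb: "dominates Adj x b" "b \<noteq> x"
    and "a \<noteq> x" "b \<in> Y" "a \<notin> Y"
  shows "transv_conj a b (ind (pconj_subst x False Y))
    = ind (pconj_subst x False Y) \<otimes>\<^bsub>Aut\<^esub> ind (comm_transv_subst x False a True b)"
proof -
  have "Y \<subseteq> V" "x \<notin> Y" using union_of_components_subset[OF Y] by (auto simp: st_def)
  then show ?thesis
    using assms
    by (intro conj_induced_map_mult[OF inverse_transv_subst] invertible_pconj_subst
        invertible_comm_transv_subst ballI raag_eq_if_free_red_eq)
      (auto simp: transv_subst_def pconj_subst_def comm_transv_subst_def)
qed

lemma transv_conj_pconj_separated_out: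
  assumes V: "a \<in> V" "b \<in> V" "x \<in> V" and ab: "dominates Adj a b" "a \<noteq> b"
    and Y: "union_of_components V Adj x Y" and xb: "dominates Adj x b" "b \<noteq> x"
    and "a \<in> Y" "b \<notin> Y"
  shows "transv_conj a b (ind (pconj_subst x False Y))
    = ind (comm_transv_subst a True x False b) \<otimes>\<^bsub>Aut\<^esub> ind (pconj_subst x False Y)"
proof -
  have "Y \<subseteq> V" "x \<notin> Y" using union_of_components_subset[OF Y] by (auto simp: st_def)
  then show ?thesis
    using assms
    by (intro conj_induced_map_mult[OF inverse_transv_subst] invertible_pconj_subst
        invertible_comm_transv_subst ballI raag_eq_if_free_red_eq)
      (auto simp: transv_subst_def pconj_subst_def comm_transv_subst_def)
qed

lemma transv_conj_pconj_dominated_out: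
  assumes V: "a \<in> V" "x \<in> V" and ax: "dominates Adj a x" "a \<noteq> x"
    and Y: "union_of_components V Adj x Y" and "a \<notin> Y"
  shows "transv_conj a x (ind (pconj_subst x False Y))
    = ind (pconj_subst x False Y) \<otimes>\<^bsub>Aut\<^esub> ind (pconj_subst a False (Y - st Adj a))"
proof -
  have Ys: "Y \<subseteq> V - st Adj x" "x \<notin> Y" using union_of_components_subset[OF Y] by (auto simp: st_def)
  have W: "union_of_components V Adj a (Y - st Adj a)"
    using union_of_components_diff_st[OF Y ax(1) V(2)] by blast
  have "\<forall>g\<in>V. subst_word (transv_subst a False x)
      (subst_word (pconj_subst x False Y) (transv_subst a True x g))
    \<doteq> subst_word (pconj_subst x False Y) (pconj_subst a False (Y - st Adj a) g)"
  proof
    fix g assume "g \<in> V"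
    show "subst_word (transv_subst a False x)
        (subst_word (pconj_subst x False Y) (transv_subst a True x g))
      \<doteq> subst_word (pconj_subst x False Y) (pconj_subst a False (Y - st Adj a) g)"
    proof (cases "g \<in> Y \<and> Adj a g")
      case True
      \<comment> \<open>the neighbour \<open>g \<in> Y\<close> of \<open>a \<notin> Y\<close> forces \<open>a \<in> lk(x)\<close>, so \<open>a\<close> commutes with \<open>x\<^sup>-\<^sup>1 g x\<close>\<close>
      have "a \<in> st Adj x"
        using True union_of_components_adj_iff[OF Y, of g a] Ys \<open>a \<notin> Y\<close> adjD by blast
      then have "commute_words [(x, True), (g, False), (x, False)] [(a, False)]"
        using True adjD V by (intro commute_words_if_st) (auto simp: st_def lk_def)
      then have "inv_letter (a, False) # [(x, True), (g, False), (x, False)] @ [(a, False)]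
          \<doteq> [(x, True), (g, False), (x, False)]"
        using V \<open>g \<in> V\<close> by (intro conj_raag_eq_if_commute) auto
      then show ?thesis
        using True Ys adjD[of a g] by (auto simp: transv_subst_def pconj_subst_def st_def lk_def)
    next
      case False
      then show ?thesis
        using V \<open>g \<in> V\<close> ax Ys \<open>a \<notin> Y\<close>
        by (intro raag_eq_if_free_red_eq) (auto simp: transv_subst_def pconj_subst_def st_def lk_def)
    qed
  qed
  then show ?thesis
    using assms W Ys
    by (intro conj_induced_map_mult[OF inverse_transv_subst[where s = False, simplified]]
        invertible_pconj_subst)
qed

lemma transv_conj_pconj_dominated_in:
  assumes V: "a \<in> V" "x \<in> V" and ax: "dominates Adj a x" "a \<noteq> x"
    and Y: "union_of_components V Adj x Y" and "a \<in> Y"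
  shows "transv_conj a x (ind (pconj_subst x False Y))
    = ind (pconj_subst a False (insert x Y - st Adj a)) \<otimes>\<^bsub>Aut\<^esub> ind (pconj_subst x False Y)"
proof -
  have Ys: "Y \<subseteq> V - st Adj x" "x \<notin> Y" using union_of_components_subset[OF Y] by (auto simp: st_def)
  have W: "union_of_components V Adj a (insert x Y - st Adj a)"
    using union_of_components_diff_st[OF Y ax(1) V(2)] by blast
  have nxa: "\<not> Adj a x" "\<not> Adj x a" using Ys \<open>a \<in> Y\<close> adjD by (auto simp: st_def lk_def)
  have "\<forall>g\<in>V. subst_word (transv_subst a False x)
      (subst_word (pconj_subst x False Y) (transv_subst a True x g))
    \<doteq> subst_word (pconj_subst a False (insert x Y - st Adj a)) (pconj_subst x False Y g)"
  proof
    fix g assume "g \<in> V"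
    show "subst_word (transv_subst a False x)
        (subst_word (pconj_subst x False Y) (transv_subst a True x g))
      \<doteq> subst_word (pconj_subst a False (insert x Y - st Adj a)) (pconj_subst x False Y g)"
    proof (cases "g \<in> Y \<and> Adj a g")
      case True
      then have gxa: "g \<noteq> x" "g \<noteq> a" using Ys adjD by auto
      have "inv_letter (a, True) # [(g, False)] @ [(a, True)] \<doteq> [(g, False)]"
        using True adjD V \<open>g \<in> V\<close>
        by (intro conj_raag_eq_if_commute commute_words_if_st) (auto simp: st_def lk_def)
      from raag_eq_context[OF raag_eq_sym[OF this], of "[(a, True), (x, True)]" "[(x, False), (a, False)]"]
      have "subst_word (transv_subst a False x)
          (subst_word (pconj_subst x False Y) (transv_subst a True x g))
        \<doteq> [(a, True), (x, True), (a, False), (g, False), (a, True), (x, False), (a, False)]"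
        using True gxa by (simp add: transv_subst_def pconj_subst_def)
      also have "\<dots> \<doteq> subst_word (pconj_subst a False (insert x Y - st Adj a)) (pconj_subst x False Y g)"
        using True gxa V \<open>g \<in> V\<close> nxa ax(2)
        by (intro raag_eq_if_free_red_eq) (auto simp: pconj_subst_def st_def lk_def)
      finally show ?thesis .
    next
      case False
      then show ?thesis
        using V \<open>g \<in> V\<close> ax Ys \<open>a \<in> Y\<close> nxa
        by (intro raag_eq_if_free_red_eq) (auto simp: transv_subst_def pconj_subst_def st_def lk_def)
    qed
  qed
  then show ?thesis
    using assms W Ys
    by (intro conj_induced_map_mult[OF inverse_transv_subst[where s = False, simplified]]
        invertible_pconj_subst)
qed

definition pconj_factors :: "'v \<Rightarrow> 'v \<Rightarrow> 'v \<Rightarrow> 'v set \<Rightarrow> ('v word set \<Rightarrow> 'v word set) set" where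
  "pconj_factors a b x Y = K_sub V Adj {a, b, x} \<union>
    {ind (pconj_subst z False Y') | z Y'.
       z \<in> {a, x} \<and> Y' \<subseteq> Y \<union> {x, a} \<and> union_of_components V Adj z Y'}"

lemma pconj_in_pconj_factors:
  "z \<in> {a, x} \<Longrightarrow> Y' \<subseteq> Y \<union> {x, a} \<Longrightarrow> union_of_components V Adj z Y'
    \<Longrightarrow> ind (pconj_subst z False Y') \<in> pconj_factors a b x Y"
  unfolding pconj_factors_def by blast

lemma K_sub_subset_pconj_factors: "K_sub V Adj {a, b, x} \<subseteq> pconj_factors a b x Y"
  unfolding pconj_factors_def by blast

lemma pconj_in_Aut:
  "z \<in> V \<Longrightarrow> union_of_components V Adj z Y \<Longrightarrow> ind (pconj_subst z s Y) \<in> carrier Aut"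
  using invertible_substD[OF invertible_pconj_subst] by blast

lemma transv_conj_pconj_factor_pair:
  assumes V: "a \<in> V" "b \<in> V" "x \<in> V" and ab: "dominates Adj a b" "a \<noteq> b"
    and Y: "union_of_components V Adj x Y" and "b \<noteq> x"
  shows "\<exists>f \<in> pconj_factors a b x Y. \<exists>h \<in> pconj_factors a b x Y \<inter> carrier Aut.
    transv_conj a b (ind (pconj_subst x False Y)) = f \<otimes>\<^bsub>Aut\<^esub> h"
proof -
  let ?F = "pconj_factors a b x Y" and ?P = "ind (pconj_subst x False Y)"
  have P: "?P \<in> ?F" "?P \<in> carrier Aut"
    using pconj_in_pconj_factors[OF _ _ Y] pconj_in_Aut[OF V(3) Y] by auto
  consider "a \<in> st Adj x \<or> (b \<in> Y \<longleftrightarrow> a \<in> Y)" | "a \<notin> st Adj x" "b \<in> Y" "a \<notin> Y"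
    | "a \<notin> st Adj x" "a \<in> Y" "b \<notin> Y"
    by blast
  then show ?thesis
  proof cases
    case 1
    then have "transv_conj a b ?P = ?P \<otimes>\<^bsub>Aut\<^esub> \<one>\<^bsub>Aut\<^esub>"
      using transv_conj_pconj_eq_pconj[OF assms] P Aut_r_one by simp
    then show ?thesis
      using P K_sub_one K_sub_subset_pconj_factors Aut_one_closed by blast
  next
    case 2
    then have xb: "dominates Adj x b" "a \<noteq> x"
      using dominates_if_separated[OF Y ab(1) \<open>b \<noteq> x\<close>] by (auto simp: st_def)
    then have "ind (comm_transv_subst x False a True b) \<in> K_sub V Adj {a, b, x}"
      using comm_transv_in_K_sub[of x "{a, b, x}" a b] ab \<open>b \<noteq> x\<close> by simp
    moreover have "ind (comm_transv_subst x False a True b) \<in> carrier Aut"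
      using invertible_substD[OF invertible_comm_transv_subst[of x a b]] xb ab \<open>b \<noteq> x\<close> V by simp
    ultimately have "ind (comm_transv_subst x False a True b) \<in> ?F \<inter> carrier Aut"
      using K_sub_subset_pconj_factors by blast
    then show ?thesis
      using transv_conj_pconj_separated_in[OF V ab Y xb(1) \<open>b \<noteq> x\<close> xb(2) 2(2,3)] P by blast
  next
    case 3
    then have xb: "dominates Adj x b"
      using dominates_if_separated[OF Y ab(1) \<open>b \<noteq> x\<close>] by auto
    then have "ind (comm_transv_subst a True x False b) \<in> K_sub V Adj {a, b, x}"
      using comm_transv_in_K_sub[of a "{a, b, x}" x b] ab \<open>b \<noteq> x\<close> 3 by (simp add: st_def)
    then have "ind (comm_transv_subst a True x False b) \<in> ?F"
      using K_sub_subset_pconj_factors by blast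
    then show ?thesis
      using transv_conj_pconj_separated_out[OF V ab Y xb \<open>b \<noteq> x\<close> 3(2,3)] P by blast
  qed
qed

lemma transv_conj_pconj_factor_pair_dominated:
  assumes V: "a \<in> V" "x \<in> V" and ax: "dominates Adj a x" "a \<noteq> x"
    and Y: "union_of_components V Adj x Y"
  shows "\<exists>f \<in> pconj_factors a x x Y. \<exists>h \<in> pconj_factors a x x Y \<inter> carrier Aut.
    transv_conj a x (ind (pconj_subst x False Y)) = f \<otimes>\<^bsub>Aut\<^esub> h"
proof -
  have P: "ind (pconj_subst x False Y) \<in> pconj_factors a x x Y \<inter> carrier Aut"
    using pconj_in_pconj_factors[OF _ _ Y] pconj_in_Aut[OF V(2) Y] by auto
  show ?thesis
  proof (cases "a \<in> Y")
    case False
    have W: "union_of_components V Adj a (Y - st Adj a)"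
      using union_of_components_diff_st[OF Y ax(1) V(2) order_refl subset_insertI] .
    have "ind (pconj_subst a False (Y - st Adj a)) \<in> pconj_factors a x x Y \<inter> carrier Aut"
      using pconj_in_pconj_factors[OF _ _ W] pconj_in_Aut[OF V(1) W] by auto
    with P show ?thesis using transv_conj_pconj_dominated_out[OF V ax Y False] by auto
  next
    case True
    have W: "union_of_components V Adj a (insert x Y - st Adj a)"
      using union_of_components_diff_st[OF Y ax(1) V(2) subset_insertI order_refl] .
    have "ind (pconj_subst a False (insert x Y - st Adj a)) \<in> pconj_factors a x x Y"
      using pconj_in_pconj_factors[OF _ _ W] by auto
    with P show ?thesis using transv_conj_pconj_dominated_in[OF V ax Y True] by auto
  qed
qed

lemma transv_conj_pconj_factorization:
  assumes "a \<in> V" "b \<in> V" "x \<in> V" "dominates Adj a b" "a \<noteq> b" "union_of_components V Adj x Y"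
  shows "\<exists>fs. set fs \<subseteq> pconj_factors a b x Y \<and>
    transv_conj a b (ind (pconj_subst x False Y)) = foldr (\<lambda>f g. f \<otimes>\<^bsub>Aut\<^esub> g) fs \<one>\<^bsub>Aut\<^esub>"
proof -
  have "\<exists>f \<in> pconj_factors a b x Y. \<exists>h \<in> pconj_factors a b x Y \<inter> carrier Aut.
    transv_conj a b (ind (pconj_subst x False Y)) = f \<otimes>\<^bsub>Aut\<^esub> h"
  proof (cases "b = x")
    case True
    with assms show ?thesis using transv_conj_pconj_factor_pair_dominated[of a x Y] by simp
  qed (use transv_conj_pconj_factor_pair[OF assms] in blast)
  then obtain f h where "f \<in> pconj_factors a b x Y" "h \<in> pconj_factors a b x Y" "h \<in> carrier Aut"
    "transv_conj a b (ind (pconj_subst x False Y)) = f \<otimes>\<^bsub>Aut\<^esub> h"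
    by blast
  then show ?thesis
    using Aut_r_one by (intro exI[of _ "[f, h]"]) simp
qed

end

theorem mainTheorem3:
  fixes V :: "'v set" and Adj :: "'v \<Rightarrow> 'v \<Rightarrow> bool" and a b c x :: 'v
  assumes "simple_graph V Adj"
    and "a \<in> V" and "b \<in> V" and "c \<in> V" and "x \<in> V"
    and "dominates Adj a b" and "a \<noteq> b"
    and "dominates Adj x c" and "x \<noteq> c"
  shows
    "(transvection V Adj (a, False) (b, False)
       \<otimes>\<^bsub>AutRAAG V Adj\<^esub> conj_one V Adj (x, False) (c, False)
       \<otimes>\<^bsub>AutRAAG V Adj\<^esub> inv\<^bsub>AutRAAG V Adj\<^esub> (transvection V Adj (a, False) (b, False))
     \<in> K_sub V Adj {a, b, c, x})
   \<and> (\<forall>Y. Y \<subseteq> V \<longrightarrow> union_of_components V Adj x Y \<longrightarrow>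
      (\<exists>fs. set fs \<subseteq> K_sub V Adj {a, b, x} \<union>
              {partial_conj V Adj (z, False) Y' | z Y'.
                 z \<in> {a, x} \<and> Y' \<subseteq> Y \<union> {x, a} \<and> union_of_components V Adj z Y'}
        \<and> transvection V Adj (a, False) (b, False)
            \<otimes>\<^bsub>AutRAAG V Adj\<^esub> partial_conj V Adj (x, False) Y
            \<otimes>\<^bsub>AutRAAG V Adj\<^esub> inv\<^bsub>AutRAAG V Adj\<^esub> (transvection V Adj (a, False) (b, False))
          = foldr (\<lambda>f g. f \<otimes>\<^bsub>AutRAAG V Adj\<^esub> g) fs \<one>\<^bsub>AutRAAG V Adj\<^esub>))
   \<and> (transvection V Adj (a, False) (b, False)
       \<otimes>\<^bsub>AutRAAG V Adj\<^esub> inner_aut V Adj [(x, False)]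
       \<otimes>\<^bsub>AutRAAG V Adj\<^esub> inv\<^bsub>AutRAAG V Adj\<^esub> (transvection V Adj (a, False) (b, False))
     \<in> K_sub V Adj {a, b, x})"
proof -
  interpret raag V Adj by (rule raag.intro) (rule assms(1))
  show ?thesis
    unfolding transvection_eq conj_one_eq partial_conj_eq inner_aut_eq
    using assms(2-9)
    by (intro conjI allI impI transv_conj_conj_one_in_K_sub
        transv_conj_pconj_factorization[unfolded pconj_factors_def] transv_conj_inner_in_K_sub)
qed

end
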